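(* Let $n,k\in\mathbb{N}$ with $0\le k\le\lfloor (n+2)/2\rfloor$. Then there are poset isomorphisms $(\mathcal{A}_k(J([n]\times[2])),\le_k)\cong(\mathcal{A}_k(\mathcal{C}(n+2,2)),\le_k)\cong\mathcal{C}(n+2,2k)$.
   Context: $[n]=\{1,\dots,n\}$; $[n]\times[2]$ has the product order and $J(Q)$ is the poset of order ideals of $Q$ under inclusion. For $k\le m$, $\mathcal{C}(m,k)$ is the set of $k$-element subsets of $[m]$ written as increasing sequences $(x_1<\dots<x_k)$, with $\mathbf{x}\le\mathbf{y}$ iff $x_i\le y_i$ for all $i$. For a finite poset $P$, $\mathcal{A}_k(P)$ is the set of antichains of $P$ of size $k$; for $A,B\in\mathcal{A}_k(P)$, $A\prec_k B$ means $A\setminus B=\{a\}$, $B\setminus A=\{b\}$ are singletons with $a<_P b$, and $\le_k$ is the reflexive transitive closure of $\prec_k$. *)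

theory Defs
  imports Main
begin

definition grid :: "nat \<Rightarrow> (nat \<times> nat) set" where
  "grid n = {1..n} \<times> {1..2}"

definition prod_le :: "nat \<times> nat \<Rightarrow> nat \<times> nat \<Rightarrow> bool" where
  "prod_le p q \<longleftrightarrow> fst p \<le> fst q \<and> snd p \<le> snd q"

definition order_ideals :: "'a set \<Rightarrow> ('a \<Rightarrow> 'a \<Rightarrow> bool) \<Rightarrow> 'a set set" where
  "order_ideals Q le = {I. I \<subseteq> Q \<and> (\<forall>x\<in>I. \<forall>y\<in>Q. le y x \<longrightarrow> y \<in> I)}"

definition Cset :: "nat \<Rightarrow> nat \<Rightarrow> nat set set" where
  "Cset m k = {S. S \<subseteq> {1..m} \<and> card S = k}"

definition C_le :: "nat set \<Rightarrow> nat set \<Rightarrow> bool" where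
  "C_le S T \<longleftrightarrow> list_all2 (\<le>) (sorted_list_of_set S) (sorted_list_of_set T)"

definition antichains_k :: "'a set \<Rightarrow> ('a \<Rightarrow> 'a \<Rightarrow> bool) \<Rightarrow> nat \<Rightarrow> 'a set set" where
  "antichains_k P le k =
     {A. A \<subseteq> P \<and> finite A \<and> card A = k \<and> (\<forall>a\<in>A. \<forall>b\<in>A. le a b \<longrightarrow> a = b)}"

definition prec_k :: "'a set \<Rightarrow> ('a \<Rightarrow> 'a \<Rightarrow> bool) \<Rightarrow> nat \<Rightarrow> 'a set \<Rightarrow> 'a set \<Rightarrow> bool" where
  "prec_k P le k A B \<longleftrightarrow> A \<in> antichains_k P le k \<and> B \<in> antichains_k P le k \<and>
     (\<exists>a b. A - B = {a} \<and> B - A = {b} \<and> le a b \<and> a \<noteq> b)"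

definition le_k :: "'a set \<Rightarrow> ('a \<Rightarrow> 'a \<Rightarrow> bool) \<Rightarrow> nat \<Rightarrow> 'a set \<Rightarrow> 'a set \<Rightarrow> bool" where
  "le_k P le k = (prec_k P le k)\<^sup>*\<^sup>*"

definition poset_iso :: "'a set \<Rightarrow> ('a \<Rightarrow> 'a \<Rightarrow> bool) \<Rightarrow> 'b set \<Rightarrow> ('b \<Rightarrow> 'b \<Rightarrow> bool) \<Rightarrow> bool" where
  "poset_iso X leX Y leY \<longleftrightarrow>
     (\<exists>f. bij_betw f X Y \<and> (\<forall>x\<in>X. \<forall>y\<in>X. leX x y \<longleftrightarrow> leY (f x) (f y)))"

end

(* The ideals of [n] x [2] are determined by their two row lengths, so J([n] x [2]) and
   C(n+2,2) are both isomorphic to the poset of pairs 1 <= x < y <= n+2 under the product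
   order, and a poset isomorphism induces one of the posets (A_k, <=_k).
   In an antichain of k such pairs all 2k endpoints are distinct and the pairs are nested,
   x_1 < ... < x_k < y_k < ... < y_1, so the antichain is determined by its endpoint set,
   a 2k-subset of [n+2]. Comparing 2k-subsets componentwise amounts to comparing their
   counting functions t |-> #{z <= t}. An elementary move A <_k B raises endpoints and so
   lowers the counting function; conversely, if the counting function of A lies above that
   of B, some endpoint of A can be shifted up by one without losing this, and that shift is
   an elementary move of antichains. *)
theory Submission
  imports Defs
begin

section \<open>Transport of isomorphisms to antichain posets\<close>

definition order_embedding ::
  "'a set \<Rightarrow> ('a \<Rightarrow> 'a \<Rightarrow> bool) \<Rightarrow> 'b set \<Rightarrow> ('b \<Rightarrow> 'b \<Rightarrow> bool) \<Rightarrow> ('a \<Rightarrow> 'b) \<Rightarrow> bool" where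
  "order_embedding X leX Y leY f \<longleftrightarrow>
     inj_on f X \<and> f ` X \<subseteq> Y \<and> (\<forall>x\<in>X. \<forall>x'\<in>X. leX x x' \<longleftrightarrow> leY (f x) (f x'))"

lemma poset_isoI:
  assumes "order_embedding X leX Y leY f" and "Y \<subseteq> f ` X"
  shows "poset_iso X leX Y leY"
  using assms unfolding order_embedding_def poset_iso_def bij_betw_def by blast

lemma poset_isoE:
  assumes "poset_iso X leX Y leY"
  obtains f g where "order_embedding X leX Y leY f" "order_embedding Y leY X leX g"
    "\<And>x. x \<in> X \<Longrightarrow> g (f x) = x" "\<And>y. y \<in> Y \<Longrightarrow> f (g y) = y"
proof -
  obtain f where f: "bij_betw f X Y" "\<forall>x\<in>X. \<forall>x'\<in>X. leX x x' \<longleftrightarrow> leY (f x) (f x')"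
    using assms unfolding poset_iso_def by blast
  define g where "g = the_inv_into X f"
  have g: "bij_betw g Y X"
    unfolding g_def using f(1) by (rule bij_betw_the_inv_into)
  have gf: "g (f x) = x" if "x \<in> X" for x
    unfolding g_def using f(1) that by (simp add: bij_betw_def the_inv_into_f_f)
  have fg: "f (g y) = y" if "y \<in> Y" for y
    unfolding g_def using f(1) that by (simp add: f_the_inv_into_f_bij_betw)
  have "leY y y' \<longleftrightarrow> leX (g y) (g y')" if "y \<in> Y" "y' \<in> Y" for y y'
  proof -
    have "g y \<in> X" "g y' \<in> X"
      using g that by (auto dest: bij_betwE)
    then show ?thesis
      using f(2) by (simp add: fg that)
  qed
  then have "order_embedding Y leY X leX g"
    using g unfolding order_embedding_def bij_betw_def by blast
  moreover have "order_embedding X leX Y leY f"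
    using f unfolding order_embedding_def bij_betw_def by blast
  ultimately show thesis
    using that gf fg by blast
qed

lemma poset_iso_sym:
  assumes "poset_iso X leX Y leY"
  shows "poset_iso Y leY X leX"
proof -
  obtain f g where f: "order_embedding X leX Y leY f" and g: "order_embedding Y leY X leX g"
    and gf: "\<And>x. x \<in> X \<Longrightarrow> g (f x) = x"
    using poset_isoE[OF assms] by metis
  have "X \<subseteq> g ` Y"
  proof
    fix x assume "x \<in> X"
    then have "f x \<in> Y" "g (f x) = x"
      using f gf unfolding order_embedding_def by auto
    then show "x \<in> g ` Y" by (metis image_eqI)
  qed
  with g show ?thesis by (rule poset_isoI)
qed

lemma poset_iso_trans:
  assumes "poset_iso X leX Y leY" and "poset_iso Y leY Z leZ"
  shows "poset_iso X leX Z leZ"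
proof -
  obtain f where f: "bij_betw f X Y" "\<forall>x\<in>X. \<forall>x'\<in>X. leX x x' \<longleftrightarrow> leY (f x) (f x')"
    using assms(1) unfolding poset_iso_def by blast
  obtain g where g: "bij_betw g Y Z" "\<forall>y\<in>Y. \<forall>y'\<in>Y. leY y y' \<longleftrightarrow> leZ (g y) (g y')"
    using assms(2) unfolding poset_iso_def by blast
  have "bij_betw (g \<circ> f) X Z"
    using f(1) g(1) by (rule bij_betw_trans)
  moreover have "\<forall>x\<in>X. \<forall>x'\<in>X. leX x x' \<longleftrightarrow> leZ ((g \<circ> f) x) ((g \<circ> f) x')"
    using f g by (auto dest: bij_betwE)
  ultimately show ?thesis
    unfolding poset_iso_def by blast
qed

lemma antichains_k_image:
  assumes f: "order_embedding P le Q le' f" and A: "A \<in> antichains_k P le k"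
  shows "f ` A \<in> antichains_k Q le' k"
proof -
  have "A \<subseteq> P" "finite A" "card A = k" "\<forall>a\<in>A. \<forall>b\<in>A. le a b \<longrightarrow> a = b"
    using A unfolding antichains_k_def by auto
  moreover have "inj_on f A"
    using f \<open>A \<subseteq> P\<close> unfolding order_embedding_def by (blast intro: inj_on_subset)
  ultimately show ?thesis
    using f unfolding antichains_k_def order_embedding_def by (auto simp: card_image subset_iff)
qed

lemma prec_k_image:
  assumes f: "order_embedding P le Q le' f" and AB: "prec_k P le k A B"
  shows "prec_k Q le' k (f ` A) (f ` B)"
proof -
  obtain a b where ab: "A - B = {a}" "B - A = {b}" "le a b" "a \<noteq> b"
    using AB unfolding prec_k_def by blast
  have ac: "A \<in> antichains_k P le k" "B \<in> antichains_k P le k"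
    using AB unfolding prec_k_def by blast+
  then have "A \<union> B \<subseteq> P"
    unfolding antichains_k_def by blast
  then have inj: "inj_on f (A \<union> B)" and "a \<in> P" "b \<in> P"
    using f ab unfolding order_embedding_def by (blast intro: inj_on_subset)+
  have "f ` A - f ` B = f ` (A - B)" "f ` B - f ` A = f ` (B - A)"
    by (auto intro!: inj_on_image_set_diff[OF inj, symmetric])
  then have "f ` A - f ` B = {f a}" "f ` B - f ` A = {f b}"
    using ab by simp_all
  moreover have "le' (f a) (f b)" "f a \<noteq> f b"
    using f ab \<open>a \<in> P\<close> \<open>b \<in> P\<close> unfolding order_embedding_def inj_on_def by blast+
  ultimately show ?thesis
    using antichains_k_image[OF f] ac unfolding prec_k_def by blast
qed

lemma le_k_image:
  assumes "order_embedding P le Q le' f" and "le_k P le k A B"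
  shows "le_k Q le' k (f ` A) (f ` B)"
  using assms(2) unfolding le_k_def
  by (induction rule: rtranclp_induct)
     (auto intro: rtranclp.rtrancl_into_rtrancl prec_k_image[OF assms(1)])

lemma poset_iso_antichains_k:
  assumes "poset_iso P le Q le'"
  shows "poset_iso (antichains_k P le k) (le_k P le k) (antichains_k Q le' k) (le_k Q le' k)"
proof -
  obtain f g where f: "order_embedding P le Q le' f" and g: "order_embedding Q le' P le g"
    and gf: "\<And>x. x \<in> P \<Longrightarrow> g (f x) = x" and fg: "\<And>y. y \<in> Q \<Longrightarrow> f (g y) = y"
    using poset_isoE[OF assms] by metis
  have gfA: "g ` f ` A = A" if "A \<in> antichains_k P le k" for A
    using that gf unfolding antichains_k_def by (force simp: image_image)
  have fgB: "f ` g ` B = B" if "B \<in> antichains_k Q le' k" for B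
    using that fg unfolding antichains_k_def by (force simp: image_image)
  have "order_embedding (antichains_k P le k) (le_k P le k)
      (antichains_k Q le' k) (le_k Q le' k) (image f)"
    unfolding order_embedding_def
  proof (intro conjI ballI)
    show "inj_on (image f) (antichains_k P le k)"
      by (metis gfA inj_onI)
    show "image f ` antichains_k P le k \<subseteq> antichains_k Q le' k"
      using antichains_k_image[OF f] by blast
    show "le_k P le k A B \<longleftrightarrow> le_k Q le' k (f ` A) (f ` B)"
      if "A \<in> antichains_k P le k" "B \<in> antichains_k P le k" for A B
      using le_k_image[OF f, of k A B] le_k_image[OF g, of k "f ` A" "f ` B"] gfA that by auto
  qed
  moreover have "antichains_k Q le' k \<subseteq> image f ` antichains_k P le k"
    using fgB antichains_k_image[OF g] by (metis image_eqI subsetI)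
  ultimately show ?thesis
    by (rule poset_isoI)
qed

section \<open>Ideals of \<open>[n] \<times> [2]\<close> and 2-subsets as pairs\<close>

definition increasing_pairs :: "nat \<Rightarrow> (nat \<times> nat) set" where
  "increasing_pairs m = {(x, y). 1 \<le> x \<and> x < y \<and> y \<le> m}"

lemma CsetD:
  assumes "Z \<in> Cset m k"
  shows "Z \<subseteq> {1..m}" "finite Z" "card Z = k"
  using assms unfolding Cset_def by (auto intro: finite_subset)

lemma C_le_doubleton:
  fixes x y x' y' :: nat
  assumes "x < y" and "x' < y'"
  shows "C_le {x, y} {x', y'} \<longleftrightarrow> x \<le> x' \<and> y \<le> y'"
  using assms by (simp add: C_le_def)

lemma Cset_2_eq: "Cset m 2 = (\<lambda>(x, y). {x, y}) ` increasing_pairs m"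
proof
  show "(\<lambda>(x, y). {x, y}) ` increasing_pairs m \<subseteq> Cset m 2"
    unfolding increasing_pairs_def Cset_def by auto
next
  show "Cset m 2 \<subseteq> (\<lambda>(x, y). {x, y}) ` increasing_pairs m"
  proof
    fix S assume S: "S \<in> Cset m 2"
    then obtain a b where "S = {a, b}" "a \<noteq> b"
      unfolding Cset_def by (auto simp: card_2_iff)
    then have xy: "S = {min a b, max a b}" "min a b < max a b"
      by (auto simp: min_def max_def)
    then have "(min a b, max a b) \<in> increasing_pairs m"
      using S unfolding Cset_def increasing_pairs_def by auto
    with xy show "S \<in> (\<lambda>(x, y). {x, y}) ` increasing_pairs m"
      by force
  qed
qed

lemma poset_iso_increasing_pairs_Cset_2:
  "poset_iso (increasing_pairs m) prod_le (Cset m 2) C_le"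
proof (rule poset_isoI)
  show "order_embedding (increasing_pairs m) prod_le (Cset m 2) C_le (\<lambda>(x, y). {x, y})"
    unfolding order_embedding_def Cset_2_eq
    by (auto simp: inj_on_def doubleton_eq_iff C_le_doubleton prod_le_def increasing_pairs_def)
qed (simp add: Cset_2_eq)

text \<open>The pair \<open>(x, y)\<close> encodes the order ideal of \<open>[n] \<times> [2]\<close> whose first row has
  length \<open>y - 2\<close> and whose second row has length \<open>x - 1\<close>; the condition \<open>x < y\<close> says
  that the second row is not longer than the first.\<close>
definition pair_ideal :: "nat \<Rightarrow> nat \<times> nat \<Rightarrow> (nat \<times> nat) set" where
  "pair_ideal n p = {(i, j) \<in> grid n. (j = 1 \<and> i + 2 \<le> snd p) \<or> (j = 2 \<and> i + 1 \<le> fst p)}"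

lemma pair_ideal_subset_iff:
  assumes "p \<in> increasing_pairs (n + 2)" and "q \<in> increasing_pairs (n + 2)"
  shows "pair_ideal n p \<subseteq> pair_ideal n q \<longleftrightarrow> prod_le p q"
proof
  obtain x y x' y' where p: "p = (x, y)" and q: "q = (x', y')"
    by fastforce
  have bounds: "1 \<le> x" "x < y" "y \<le> n + 2" "1 \<le> x'" "x' < y'" "y' \<le> n + 2"
    using assms unfolding p q increasing_pairs_def by auto
  assume sub: "pair_ideal n p \<subseteq> pair_ideal n q"
  have "y \<le> y'"
  proof (rule ccontr)
    assume "\<not> y \<le> y'"
    then have "(y - 2, 1) \<in> pair_ideal n p - pair_ideal n q"
      using bounds unfolding p q pair_ideal_def grid_def by auto
    with sub show False by blast
  qed
  moreover have "x \<le> x'"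
  proof (rule ccontr)
    assume "\<not> x \<le> x'"
    then have "(x - 1, 2) \<in> pair_ideal n p - pair_ideal n q"
      using bounds unfolding p q pair_ideal_def grid_def by auto
    with sub show False by blast
  qed
  ultimately show "prod_le p q"
    unfolding p q prod_le_def by simp
qed (auto simp: pair_ideal_def prod_le_def)

lemma downward_closed_eq_atLeastAtMost:
  fixes S :: "nat set"
  assumes "S \<subseteq> {1..n}" and "\<And>i i'. i \<in> S \<Longrightarrow> 1 \<le> i' \<Longrightarrow> i' \<le> i \<Longrightarrow> i' \<in> S"
  shows "S = {1..card S}"
proof (cases "S = {}")
  case False
  have "finite S"
    using assms(1) finite_subset by blast
  with False have "Max S \<in> S" by simp
  have "S = {1..Max S}"
  proof
    show "S \<subseteq> {1..Max S}"
      using assms(1) \<open>finite S\<close> by auto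
    show "{1..Max S} \<subseteq> S"
      using assms(2) \<open>Max S \<in> S\<close> by auto
  qed
  then show ?thesis
    by (metis card_atLeastAtMost diff_Suc_1)
qed simp

lemma order_ideal_row:
  assumes I: "I \<in> order_ideals (grid n) prod_le" and j: "j \<in> {1, 2}"
  shows "{i. (i, j) \<in> I} = {1..card {i. (i, j) \<in> I}}"
proof (rule downward_closed_eq_atLeastAtMost)
  show "{i. (i, j) \<in> I} \<subseteq> {1..n}"
    using I unfolding order_ideals_def grid_def by auto
  show "i' \<in> {i. (i, j) \<in> I}" if "i \<in> {i. (i, j) \<in> I}" "1 \<le> i'" "i' \<le> i" for i i'
  proof -
    have "(i, j) \<in> I" "(i, j) \<in> grid n"
      using that I unfolding order_ideals_def by auto
    moreover have "(i', j) \<in> grid n" "prod_le (i', j) (i, j)"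
      using \<open>(i, j) \<in> grid n\<close> that unfolding grid_def prod_le_def by auto
    ultimately show ?thesis
      using I unfolding order_ideals_def by blast
  qed
qed

lemma order_ideal_eq_pair_ideal:
  assumes I: "I \<in> order_ideals (grid n) prod_le"
  obtains p where "p \<in> increasing_pairs (n + 2)" and "I = pair_ideal n p"
proof -
  define a where "a = card {i. (i, 1::nat) \<in> I}"
  define b where "b = card {i. (i, 2::nat) \<in> I}"
  have row1: "(i, 1) \<in> I \<longleftrightarrow> i \<in> {1..a}" for i
    using order_ideal_row[OF I, of 1] unfolding a_def by blast
  have row2: "(i, 2) \<in> I \<longleftrightarrow> i \<in> {1..b}" for i
    using order_ideal_row[OF I, of 2] unfolding b_def by blast
  have sub: "I \<subseteq> grid n" and down: "\<And>x y. x \<in> I \<Longrightarrow> y \<in> grid n \<Longrightarrow> prod_le y x \<Longrightarrow> y \<in> I"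
    using I unfolding order_ideals_def by auto
  have "a \<le> n"
    using row1[of a] sub unfolding grid_def by (cases "a = 0") auto
  moreover have "b \<le> a"
    using row2[of b] row1[of b] down[of "(b, 2)" "(b, 1)"] sub
    unfolding grid_def prod_le_def by (cases "b = 0") auto
  moreover have "z \<in> I \<longleftrightarrow> z \<in> pair_ideal n (b + 1, a + 2)" for z
  proof -
    obtain i j where z: "z = (i, j)"
      by fastforce
    consider "j = 1" | "j = 2" | "j \<notin> {1, 2}"
      by blast
    then show ?thesis
      using sub row1 row2 \<open>a \<le> n\<close> \<open>b \<le> a\<close> unfolding z pair_ideal_def grid_def
      by cases auto
  qed
  then have "I = pair_ideal n (b + 1, a + 2)"
    by blast
  ultimately show thesis
    by (intro that[of "(b + 1, a + 2)"]) (auto simp: increasing_pairs_def)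
qed

lemma poset_iso_increasing_pairs_order_ideals:
  "poset_iso (increasing_pairs (n + 2)) prod_le (order_ideals (grid n) prod_le) (\<subseteq>)"
proof (rule poset_isoI)
  have "pair_ideal n p \<in> order_ideals (grid n) prod_le" if "p \<in> increasing_pairs (n + 2)" for p
    using that unfolding order_ideals_def pair_ideal_def grid_def prod_le_def increasing_pairs_def
    by auto
  moreover have "inj_on (pair_ideal n) (increasing_pairs (n + 2))"
  proof (rule inj_onI)
    fix p q
    assume "p \<in> increasing_pairs (n + 2)" "q \<in> increasing_pairs (n + 2)"
      and "pair_ideal n p = pair_ideal n q"
    then have "prod_le p q" "prod_le q p"
      using pair_ideal_subset_iff by blast+
    then show "p = q"
      unfolding prod_le_def by (simp add: prod_eq_iff)
  qed
  ultimately show "order_embedding (increasing_pairs (n + 2)) prod_le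
      (order_ideals (grid n) prod_le) (\<subseteq>) (pair_ideal n)"
    unfolding order_embedding_def by (simp add: image_subset_iff pair_ideal_subset_iff)
  show "order_ideals (grid n) prod_le \<subseteq> pair_ideal n ` increasing_pairs (n + 2)"
    using order_ideal_eq_pair_ideal by blast
qed

section \<open>Sorted lists and counting functions\<close>

lemma sorted_wrt_less_nth_less_iff:
  fixes xs :: "'a::linorder list"
  assumes "sorted_wrt (<) xs" and "i < length xs" and "j < length xs"
  shows "xs ! i < xs ! j \<longleftrightarrow> i < j"
  using assms sorted_wrt_nth_less[OF assms(1)]
  by (metis linorder_neqE_nat order_less_asym order_less_irrefl)

lemma sorted_wrt_less_nth_le_iff:
  fixes xs :: "'a::linorder list"
  assumes "sorted_wrt (<) xs" and "i < length xs" and "j < length xs"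
  shows "xs ! i \<le> xs ! j \<longleftrightarrow> i \<le> j"
  using sorted_wrt_less_nth_less_iff[OF assms(1,3,2)] by (simp add: not_less[symmetric])

lemma card_less_nth:
  fixes xs :: "'a::linorder list"
  assumes xs: "sorted_wrt (<) xs" and i: "i < length xs"
  shows "card {x \<in> set xs. x < xs ! i} = i"
proof -
  have "{x \<in> set xs. x < xs ! i} = (!) xs ` {..<i}"
  proof (intro equalityI subsetI)
    fix x assume "x \<in> {x \<in> set xs. x < xs ! i}"
    then obtain j where "j < length xs" "x = xs ! j" "xs ! j < xs ! i"
      by (auto simp: in_set_conv_nth)
    then show "x \<in> (!) xs ` {..<i}"
      using sorted_wrt_less_nth_less_iff[OF xs _ i] by auto
  qed (use sorted_wrt_less_nth_less_iff[OF xs _ i] i in auto)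
  moreover have "inj_on ((!) xs) {..<i}"
    using xs i by (intro inj_on_nth) (auto simp: strict_sorted_iff)
  ultimately show ?thesis
    by (simp add: card_image)
qed

lemma card_greater_nth:
  fixes xs :: "'a::linorder list"
  assumes xs: "sorted_wrt (<) xs" and i: "i < length xs"
  shows "card {x \<in> set xs. xs ! i < x} = length xs - 1 - i"
proof -
  have "{x \<in> set xs. xs ! i < x} = (!) xs ` {i<..<length xs}"
  proof (intro equalityI subsetI)
    fix x assume "x \<in> {x \<in> set xs. xs ! i < x}"
    then obtain j where "j < length xs" "x = xs ! j" "xs ! i < xs ! j"
      by (auto simp: in_set_conv_nth)
    then show "x \<in> (!) xs ` {i<..<length xs}"
      using sorted_wrt_less_nth_less_iff[OF xs i] by auto
  qed (use sorted_wrt_less_nth_less_iff[OF xs i] i in auto)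
  moreover have "inj_on ((!) xs) {i<..<length xs}"
    using xs by (intro inj_on_nth) (auto simp: strict_sorted_iff)
  ultimately show ?thesis
    by (simp add: card_image)
qed

definition count_upto :: "nat set \<Rightarrow> nat \<Rightarrow> nat" where
  "count_upto S t = card {x \<in> S. x \<le> t}"

lemma count_upto_set_sorted:
  assumes "sorted_wrt (<) xs"
  shows "count_upto (set xs) t = card {i. i < length xs \<and> xs ! i \<le> t}"
proof -
  have "{x \<in> set xs. x \<le> t} = (!) xs ` {i. i < length xs \<and> xs ! i \<le> t}"
    by (auto simp: in_set_conv_nth)
  moreover have "inj_on ((!) xs) {i. i < length xs \<and> xs ! i \<le> t}"
    using assms by (intro inj_on_nth) (auto simp: strict_sorted_iff)
  ultimately show ?thesis
    unfolding count_upto_def by (simp add: card_image)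
qed

lemma count_upto_nth:
  assumes xs: "sorted_wrt (<) xs" and i: "i < length xs"
  shows "count_upto (set xs) (xs ! i) = Suc i"
proof -
  have "{x \<in> set xs. x \<le> xs ! i} = insert (xs ! i) {x \<in> set xs. x < xs ! i}"
    using i by auto
  then show ?thesis
    unfolding count_upto_def using card_less_nth[OF xs i] by simp
qed

lemma count_upto_less_nth:
  assumes xs: "sorted_wrt (<) xs" and i: "i < length xs" and t: "t < xs ! i"
  shows "count_upto (set xs) t \<le> i"
proof -
  have "{x \<in> set xs. x \<le> t} \<subseteq> {x \<in> set xs. x < xs ! i}"
    using t by auto
  then have "card {x \<in> set xs. x \<le> t} \<le> card {x \<in> set xs. x < xs ! i}"
    by (rule card_mono[rotated]) simp
  then show ?thesis
    unfolding count_upto_def using card_less_nth[OF xs i] by simp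
qed

lemma C_le_iff_count_upto:
  assumes "finite S" and "finite T" and "card S = card T"
  shows "C_le S T \<longleftrightarrow> (\<forall>t. count_upto T t \<le> count_upto S t)"
proof -
  define xs ys where "xs = sorted_list_of_set S" and "ys = sorted_list_of_set T"
  have xs: "sorted_wrt (<) xs" "set xs = S" and ys: "sorted_wrt (<) ys" "set ys = T"
    using assms unfolding xs_def ys_def by auto
  have len: "length ys = length xs"
    using assms unfolding xs_def ys_def by simp
  have C_le: "C_le S T \<longleftrightarrow> (\<forall>i < length xs. xs ! i \<le> ys ! i)"
    unfolding C_le_def xs_def[symmetric] ys_def[symmetric] using len
    by (simp add: list_all2_conv_all_nth)
  show ?thesis
  proof
    assume "C_le S T"
    then have "{i. i < length xs \<and> ys ! i \<le> t} \<subseteq> {i. i < length xs \<and> xs ! i \<le> t}" for t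
      unfolding C_le by fastforce
    then show "\<forall>t. count_upto T t \<le> count_upto S t"
      using count_upto_set_sorted[OF xs(1)] count_upto_set_sorted[OF ys(1)] xs(2) ys(2) len
      by (simp add: card_mono)
  next
    assume dom: "\<forall>t. count_upto T t \<le> count_upto S t"
    show "C_le S T"
      unfolding C_le
    proof (intro allI impI)
      fix i assume i: "i < length xs"
      have "Suc i \<le> count_upto S (ys ! i)"
        using dom count_upto_nth[OF ys(1)] i len ys(2) by metis
      then show "xs ! i \<le> ys ! i"
        using count_upto_less_nth[OF xs(1) i] xs(2) by (metis not_le not_less_eq_eq)
    qed
  qed
qed

lemma C_le_antisym:
  assumes "finite S" and "finite T" and "C_le S T" and "C_le T S"
  shows "S = T"
proof -
  have "sorted_list_of_set S = sorted_list_of_set T"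
    using assms(3,4) unfolding C_le_def by (rule list_all2_antisym[rotated]) simp
  with assms(1,2) show ?thesis
    by (metis sorted_list_of_set.set_sorted_key_list_of_set)
qed

lemma count_upto_Suc:
  assumes "finite Z"
  shows "count_upto Z (Suc t) = count_upto Z t + (if Suc t \<in> Z then 1 else 0)"
proof -
  have "{x \<in> Z. x \<le> Suc t} = (if Suc t \<in> Z then insert (Suc t) {x \<in> Z. x \<le> t} else {x \<in> Z. x \<le> t})"
    by (auto simp: le_Suc_eq)
  then show ?thesis
    unfolding count_upto_def using assms by simp
qed

lemma count_upto_mono:
  assumes "finite Z" and "t \<le> t'"
  shows "count_upto Z t \<le> count_upto Z t'"
  unfolding count_upto_def using assms by (intro card_mono) auto

lemma count_upto_eq_card:
  assumes "Z \<subseteq> {1..m}" and "m \<le> t"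
  shows "count_upto Z t = card Z"
proof -
  have "{x \<in> Z. x \<le> t} = Z"
    using assms by auto
  then show ?thesis
    unfolding count_upto_def by simp
qed

lemma count_upto_insert:
  assumes "finite Z" and "x \<notin> Z"
  shows "count_upto (insert x Z) t = count_upto Z t + (if x \<le> t then 1 else 0)"
proof -
  have "{y \<in> insert x Z. y \<le> t} = (if x \<le> t then insert x {y \<in> Z. y \<le> t} else {y \<in> Z. y \<le> t})"
    by auto
  then show ?thesis
    unfolding count_upto_def using assms by simp
qed

lemma count_upto_shift:
  assumes "finite Z" and "z \<in> Z" and "Suc z \<notin> Z"
  shows "count_upto (insert (Suc z) (Z - {z})) t = (if t = z then count_upto Z t - 1 else count_upto Z t)"
proof -
  have "count_upto Z t = count_upto (Z - {z}) t + (if z \<le> t then 1 else 0)"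
    using count_upto_insert[of "Z - {z}" z t] assms(1,2) by (simp add: insert_absorb)
  moreover have "count_upto (insert (Suc z) (Z - {z})) t =
      count_upto (Z - {z}) t + (if Suc z \<le> t then 1 else 0)"
    using count_upto_insert[of "Z - {z}" "Suc z" t] assms(1,3) by simp
  ultimately show ?thesis
    by auto
qed

lemma count_upto_less_at_element:
  assumes fin: "finite Z" "finite W" and t: "count_upto W t < count_upto Z t"
  obtains z where "z \<in> Z" "count_upto W z < count_upto Z z"
proof -
  define z where "z = Max {x \<in> Z. x \<le> t}"
  have "{x \<in> Z. x \<le> t} \<noteq> {}"
    using t unfolding count_upto_def by (metis card.empty not_less0)
  then have "z \<in> {x \<in> Z. x \<le> t}"
    using fin unfolding z_def by (intro Max_in) auto
  moreover have "x \<le> z" if "x \<in> Z" "x \<le> t" for x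
    using fin that unfolding z_def by (intro Max_ge) auto
  ultimately have "z \<in> Z" "z \<le> t" "{x \<in> Z. x \<le> z} = {x \<in> Z. x \<le> t}"
    by fastforce+
  then have "count_upto W z < count_upto Z z"
    using t count_upto_mono[OF fin(2) \<open>z \<le> t\<close>] unfolding count_upto_def by simp
  with \<open>z \<in> Z\<close> show thesis
    using that by blast
qed

text \<open>Take the largest \<open>z \<in> Z\<close> at which \<open>W\<close> falls short of \<open>Z\<close>; then \<open>Suc z \<notin> Z\<close>,
  and \<open>z < m\<close> because both counts reach \<open>card Z\<close> at \<open>m\<close>.\<close>
lemma obtain_shiftable_element:
  assumes Z: "Z \<subseteq> {1..m}" and W: "W \<subseteq> {1..m}" and card: "card Z = card W"
    and t: "count_upto W t < count_upto Z t"
  obtains z where "z \<in> Z" "Suc z \<notin> Z" "Suc z \<le> m" "count_upto W z < count_upto Z z"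
proof -
  have fin: "finite Z" "finite W"
    using Z W finite_subset by auto
  define S where "S = {z \<in> Z. count_upto W z < count_upto Z z}"
  have "finite S" "S \<noteq> {}"
    using fin count_upto_less_at_element[OF fin t] unfolding S_def by auto
  define z where "z = Max S"
  have "z \<in> S" and z_max: "\<And>y. y \<in> S \<Longrightarrow> y \<le> z"
    using \<open>finite S\<close> \<open>S \<noteq> {}\<close> unfolding z_def by auto
  then have "z \<in> Z" and less: "count_upto W z < count_upto Z z"
    unfolding S_def by auto
  moreover have "Suc z \<notin> Z"
  proof
    assume "Suc z \<in> Z"
    with less have "Suc z \<in> S"
      unfolding S_def using count_upto_Suc[OF fin(1), of z] count_upto_Suc[OF fin(2), of z] by auto
    then show False
      using z_max by fastforce
  qed
  moreover have "z \<noteq> m"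
    using less count_upto_eq_card[OF Z] count_upto_eq_card[OF W] card by force
  then have "Suc z \<le> m"
    using \<open>z \<in> Z\<close> Z by fastforce
  ultimately show thesis
    using that by blast
qed

section \<open>Antichains of pairs and their endpoint sets\<close>

abbreviation pair_antichains :: "nat \<Rightarrow> nat \<Rightarrow> (nat \<times> nat) set set" where
  "pair_antichains m k \<equiv> antichains_k (increasing_pairs m) prod_le k"

definition endpoints :: "(nat \<times> nat) set \<Rightarrow> nat set" where
  "endpoints A = fst ` A \<union> snd ` A"

lemma endpoints_insert: "endpoints (insert p A) = insert (fst p) (insert (snd p) (endpoints A))"
  unfolding endpoints_def by auto

lemma pair_antichainsD:
  assumes "A \<in> pair_antichains m k"
  shows "A \<subseteq> increasing_pairs m" "finite A" "card A = k"
    "\<And>p q. p \<in> A \<Longrightarrow> q \<in> A \<Longrightarrow> prod_le p q \<Longrightarrow> p = q"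
  using assms unfolding antichains_k_def by auto

lemma pair_antichain_memD:
  assumes "A \<in> pair_antichains m k" and "p \<in> A"
  shows "1 \<le> fst p" "fst p < snd p" "snd p \<le> m"
  using assms pair_antichainsD(1)[OF assms(1)] unfolding increasing_pairs_def by auto

lemma pair_antichain_nested:
  assumes A: "A \<in> pair_antichains m k" and "p \<in> A" "q \<in> A" "p \<noteq> q"
  shows "fst p \<noteq> fst q" "snd p \<noteq> snd q" "fst p \<noteq> snd q" "fst p < fst q \<longleftrightarrow> snd q < snd p"
proof -
  have "fst p < snd p" "fst q < snd q"
    using pair_antichain_memD(2)[OF A] assms(2,3) by auto
  moreover have "\<not> prod_le p q" "\<not> prod_le q p"
    using pair_antichainsD(4)[OF A] assms(2-4) by metis+
  ultimately show "fst p \<noteq> fst q" "snd p \<noteq> snd q" "fst p \<noteq> snd q" "fst p < fst q \<longleftrightarrow> snd q < snd p"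
    unfolding prod_le_def by auto
qed

lemma pair_antichain_inj_on:
  assumes "A \<in> pair_antichains m k"
  shows "inj_on fst A" "inj_on snd A"
  using pair_antichain_nested(1,2)[OF assms] unfolding inj_on_def by blast+

lemma endpoints_in_Cset:
  assumes A: "A \<in> pair_antichains m k"
  shows "endpoints A \<in> Cset m (2 * k)"
proof -
  have "fst ` A \<inter> snd ` A = {}"
    using pair_antichain_nested(3)[OF A] pair_antichain_memD(2)[OF A] by fastforce
  then have "card (endpoints A) = card (fst ` A) + card (snd ` A)"
    unfolding endpoints_def using pair_antichainsD(2)[OF A] by (simp add: card_Un_disjoint)
  also have "\<dots> = 2 * k"
    using pair_antichain_inj_on[OF A] pair_antichainsD(3)[OF A] by (simp add: card_image)
  finally show ?thesis
    using pair_antichain_memD[OF A] unfolding Cset_def endpoints_def by fastforce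
qed

lemma endpoints_less_fst:
  assumes A: "A \<in> pair_antichains m k" and p: "p \<in> A"
  shows "{u \<in> endpoints A. u < fst p} = fst ` {q \<in> A. fst q < fst p}"
proof (intro equalityI subsetI)
  fix u assume "u \<in> {u \<in> endpoints A. u < fst p}"
  then obtain q where q: "q \<in> A" "u = fst q \<or> u = snd q" "u < fst p"
    unfolding endpoints_def by auto
  have "u \<noteq> snd q"
  proof
    assume "u = snd q"
    then have "prod_le q p"
      using q pair_antichain_memD[OF A p] pair_antichain_memD[OF A q(1)] unfolding prod_le_def by auto
    then show False
      using pair_antichainsD(4)[OF A q(1) p] \<open>u = snd q\<close> q(3) pair_antichain_memD(2)[OF A p] by auto
  qed
  with q show "u \<in> fst ` {q \<in> A. fst q < fst p}"
    by auto
qed (auto simp: endpoints_def)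

lemma endpoints_greater_snd:
  assumes A: "A \<in> pair_antichains m k" and p: "p \<in> A"
  shows "{u \<in> endpoints A. snd p < u} = snd ` {q \<in> A. fst q < fst p}"
proof (intro equalityI subsetI)
  fix u assume "u \<in> {u \<in> endpoints A. snd p < u}"
  then obtain q where q: "q \<in> A" "u = fst q \<or> u = snd q" "snd p < u"
    unfolding endpoints_def by auto
  then have "q \<noteq> p"
    using pair_antichain_memD(2)[OF A p] by auto
  have "u \<noteq> fst q"
  proof
    assume "u = fst q"
    then have "prod_le p q"
      using q pair_antichain_memD[OF A p] pair_antichain_memD[OF A q(1)] unfolding prod_le_def by auto
    then show False
      using pair_antichainsD(4)[OF A p q(1)] \<open>q \<noteq> p\<close> by auto
  qed
  with q have "u = snd q" and "snd p < snd q"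
    by auto
  then have "fst q < fst p"
    using pair_antichain_nested(1,4)[OF A q(1) p \<open>q \<noteq> p\<close>] by auto
  with q(1) \<open>u = snd q\<close> show "u \<in> snd ` {q \<in> A. fst q < fst p}"
    by auto
next
  fix u assume "u \<in> snd ` {q \<in> A. fst q < fst p}"
  then obtain q where q: "q \<in> A" "fst q < fst p" "u = snd q"
    by auto
  then have "snd p < snd q"
    using pair_antichain_nested(4)[OF A q(1) p] by auto
  with q show "u \<in> {u \<in> endpoints A. snd p < u}"
    unfolding endpoints_def by auto
qed

lemma card_endpoints_less_fst_eq_greater_snd:
  assumes A: "A \<in> pair_antichains m k" and p: "p \<in> A"
  shows "card {u \<in> endpoints A. u < fst p} = card {u \<in> endpoints A. snd p < u}"
  unfolding endpoints_less_fst[OF A p] endpoints_greater_snd[OF A p]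
  using pair_antichain_inj_on[OF A] by (simp add: card_image inj_on_subset)

definition nested_pairs :: "nat \<Rightarrow> nat set \<Rightarrow> (nat \<times> nat) set" where
  "nested_pairs k Z =
     (\<lambda>i. (sorted_list_of_set Z ! i, sorted_list_of_set Z ! (2 * k - 1 - i))) ` {..<k}"

lemma sorted_list_of_Cset:
  assumes "Z \<in> Cset m k"
  shows "sorted_wrt (<) (sorted_list_of_set Z)" "set (sorted_list_of_set Z) = Z"
    "length (sorted_list_of_set Z) = k" "distinct (sorted_list_of_set Z)"
  using CsetD[OF assms] by auto

lemma nested_pairs_endpoints:
  assumes A: "A \<in> pair_antichains m k"
  shows "nested_pairs k (endpoints A) = A"
proof -
  define zs where "zs = sorted_list_of_set (endpoints A)"
  have zs: "sorted_wrt (<) zs" "set zs = endpoints A" "length zs = 2 * k"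
    using sorted_list_of_Cset[OF endpoints_in_Cset[OF A]] unfolding zs_def by auto
  have "A \<subseteq> nested_pairs k (endpoints A)"
  proof
    fix p assume p: "p \<in> A"
    have "fst p \<in> set zs" "snd p \<in> set zs"
      using zs(2) p unfolding endpoints_def by auto
    then obtain r j where rj: "r < 2 * k" "zs ! r = fst p" "j < 2 * k" "zs ! j = snd p"
      using zs(3) by (metis in_set_conv_nth)
    have "r = card {u \<in> endpoints A. u < fst p}"
      using card_less_nth[OF zs(1), of r] rj zs by simp
    also have "\<dots> = card {u \<in> endpoints A. snd p < u}"
      by (rule card_endpoints_less_fst_eq_greater_snd[OF A p])
    also have "\<dots> = 2 * k - 1 - j"
      using card_greater_nth[OF zs(1), of j] rj zs by simp
    finally have "r = 2 * k - 1 - j" .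
    moreover have "r < j"
      using sorted_wrt_less_nth_less_iff[OF zs(1), of r j] rj zs(3) pair_antichain_memD(2)[OF A p]
      by simp
    ultimately have "r < k" "p = (zs ! r, zs ! (2 * k - 1 - r))"
      using rj by (auto simp: prod_eq_iff)
    then show "p \<in> nested_pairs k (endpoints A)"
      unfolding nested_pairs_def zs_def[symmetric] by blast
  qed
  moreover have "card (nested_pairs k (endpoints A)) \<le> k"
    unfolding nested_pairs_def by (metis card_image_le card_lessThan finite_lessThan)
  ultimately show ?thesis
    using card_seteq[of "nested_pairs k (endpoints A)" A] pair_antichainsD(3)[OF A]
    unfolding nested_pairs_def by simp
qed

lemma nested_pairs_in_pair_antichains:
  assumes Z: "Z \<in> Cset m (2 * k)"
  shows "nested_pairs k Z \<in> pair_antichains m k"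
proof -
  define zs where "zs = sorted_list_of_set Z"
  have zs: "sorted_wrt (<) zs" "set zs = Z" "length zs = 2 * k" "distinct zs"
    using sorted_list_of_Cset[OF Z] unfolding zs_def by auto
  have inZ: "zs ! j \<in> Z" if "j < 2 * k" for j
    using that zs(2,3) by (metis nth_mem)
  let ?pair = "\<lambda>i. (zs ! i, zs ! (2 * k - 1 - i))"
  have N: "nested_pairs k Z = ?pair ` {..<k}"
    unfolding nested_pairs_def zs_def ..
  have "?pair i \<in> increasing_pairs m" if "i < k" for i
  proof -
    have "zs ! i < zs ! (2 * k - 1 - i)"
      using sorted_wrt_less_nth_less_iff[OF zs(1)] zs(3) that by simp
    moreover have "zs ! i \<in> Z" "zs ! (2 * k - 1 - i) \<in> Z"
      using inZ that by auto
    ultimately show ?thesis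
      using Z unfolding Cset_def increasing_pairs_def by auto
  qed
  moreover have "inj_on ?pair {..<k}"
    using nth_eq_iff_index_eq[OF zs(4)] zs(3) by (auto intro!: inj_onI)
  moreover have "i = j" if "i < k" "j < k" "prod_le (?pair i) (?pair j)" for i j
  proof -
    have "i \<le> j" "2 * k - 1 - i \<le> 2 * k - 1 - j"
      using that sorted_wrt_less_nth_le_iff[OF zs(1)] zs(3) unfolding prod_le_def by auto
    with that show "i = j"
      by auto
  qed
  ultimately show ?thesis
    unfolding N antichains_k_def by (auto simp: card_image)
qed

lemma endpoints_nested_pairs:
  assumes Z: "Z \<in> Cset m (2 * k)"
  shows "endpoints (nested_pairs k Z) = Z"
proof -
  define zs where "zs = sorted_list_of_set Z"
  have zs: "set zs = Z" "length zs = 2 * k"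
    using sorted_list_of_Cset[OF Z] unfolding zs_def by auto
  have N: "nested_pairs k Z = (\<lambda>i. (zs ! i, zs ! (2 * k - 1 - i))) ` {..<k}"
    unfolding nested_pairs_def zs_def ..
  have "endpoints (nested_pairs k Z) = (\<lambda>i. zs ! i) ` {..<2 * k}"
  proof -
    have indices: "{..<2 * k} = {..<k} \<union> (\<lambda>i. 2 * k - 1 - i) ` {..<k}"
    proof (intro equalityI subsetI)
      fix j assume "j \<in> {..<2 * k}"
      then show "j \<in> {..<k} \<union> (\<lambda>i. 2 * k - 1 - i) ` {..<k}"
        by (cases "j < k") (auto intro!: image_eqI[of _ _ "2 * k - 1 - j"])
    qed auto
    show ?thesis
      unfolding N endpoints_def indices by (simp only: image_Un image_image fst_conv snd_conv)
  qed
  also have "\<dots> = Z"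
    using zs by (auto simp: in_set_conv_nth)
  finally show ?thesis .
qed

lemma bij_betw_endpoints:
  "bij_betw endpoints (pair_antichains m k) (Cset m (2 * k))"
  by (rule bij_betw_byWitness[where f' = "nested_pairs k"])
     (auto simp: nested_pairs_endpoints endpoints_in_Cset nested_pairs_in_pair_antichains
       endpoints_nested_pairs)

lemma endpoints_remove:
  assumes A: "A \<in> pair_antichains m k" and p: "p \<in> A"
  shows "endpoints A = insert (fst p) (insert (snd p) (endpoints (A - {p})))"
    "fst p \<notin> endpoints (A - {p})" "snd p \<notin> endpoints (A - {p})"
proof -
  show "endpoints A = insert (fst p) (insert (snd p) (endpoints (A - {p})))"
    using p endpoints_insert[of p "A - {p}"] by (simp add: insert_absorb)
  have "fst p \<noteq> fst q \<and> fst p \<noteq> snd q \<and> snd p \<noteq> snd q \<and> snd p \<noteq> fst q" if "q \<in> A - {p}" for q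
  proof -
    have "q \<in> A" "p \<noteq> q"
      using that by auto
    then show ?thesis
      using pair_antichain_nested(1-3)[OF A p] pair_antichain_nested(3)[OF A _ p] by metis
  qed
  then show "fst p \<notin> endpoints (A - {p})" "snd p \<notin> endpoints (A - {p})"
    unfolding endpoints_def by auto
qed

lemma count_upto_endpoints_remove:
  assumes A: "A \<in> pair_antichains m k" and p: "p \<in> A"
  shows "count_upto (endpoints A) t =
    count_upto (endpoints (A - {p})) t + (if fst p \<le> t then 1 else 0) + (if snd p \<le> t then 1 else 0)"
proof -
  have "finite (endpoints (A - {p}))"
    using pair_antichainsD(2)[OF A] unfolding endpoints_def by simp
  moreover have "fst p \<noteq> snd p"
    using pair_antichain_memD(2)[OF A p] by simp
  ultimately show ?thesis
    using endpoints_remove[OF A p] by (simp add: count_upto_insert)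
qed

lemma prec_k_count_upto:
  assumes "prec_k (increasing_pairs m) prod_le k A B"
  shows "count_upto (endpoints B) t \<le> count_upto (endpoints A) t"
proof -
  obtain a b where ab: "A - B = {a}" "B - A = {b}" "prod_le a b"
    using assms unfolding prec_k_def by blast
  have A: "A \<in> pair_antichains m k" and B: "B \<in> pair_antichains m k"
    using assms unfolding prec_k_def by blast+
  have "a \<in> A" "b \<in> B" "A - {a} = B - {b}"
    using ab by blast+
  then show ?thesis
    using count_upto_endpoints_remove[OF A \<open>a \<in> A\<close>] count_upto_endpoints_remove[OF B \<open>b \<in> B\<close>] ab(3)
    unfolding prod_le_def by auto
qed

lemma le_k_count_upto:
  assumes "le_k (increasing_pairs m) prod_le k A B"
  shows "count_upto (endpoints B) t \<le> count_upto (endpoints A) t"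
  using assms unfolding le_k_def
  by (induction rule: rtranclp_induct) (auto dest: prec_k_count_upto[where t = t])

lemma prec_k_replace:
  assumes A: "A \<in> antichains_k P le k" and p: "p \<in> A"
    and p': "p' \<in> P" "p' \<notin> A" "le p p'" "p \<noteq> p'"
    and incomparable: "\<And>q. q \<in> A - {p} \<Longrightarrow> \<not> le q p' \<and> \<not> le p' q"
  shows "prec_k P le k A (insert p' (A - {p}))"
proof -
  have "finite A" "card A = k"
    using A unfolding antichains_k_def by auto
  moreover have "0 < k"
    using p \<open>finite A\<close> \<open>card A = k\<close> card_gt_0_iff by blast
  ultimately have "card (insert p' (A - {p})) = k"
    using p p'(2) by simp
  then have "insert p' (A - {p}) \<in> antichains_k P le k"
    using A p' incomparable \<open>finite A\<close> unfolding antichains_k_def by auto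
  moreover have "A - insert p' (A - {p}) = {p}" "insert p' (A - {p}) - A = {p'}"
    using p p' by auto
  ultimately show ?thesis
    using A p' unfolding prec_k_def by blast
qed

lemma prec_k_enlarge_pair:
  assumes A: "A \<in> pair_antichains m k" and p: "p \<in> A"
    and p': "p' \<in> increasing_pairs m" "prod_le p p'" "p \<noteq> p'"
    and gap: "\<And>u. u \<in> endpoints (A - {p}) \<Longrightarrow>
      \<not> (fst p \<le> u \<and> u \<le> fst p') \<and> \<not> (snd p \<le> u \<and> u \<le> snd p')"
  shows "prec_k (increasing_pairs m) prod_le k A (insert p' (A - {p}))"
proof (rule prec_k_replace[OF A p p'(1) _ p'(2,3)])
  have fst_snd: "fst q \<in> endpoints (A - {p})" "snd q \<in> endpoints (A - {p})" if "q \<in> A - {p}" for q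
    using that unfolding endpoints_def by auto
  show "p' \<notin> A"
  proof
    assume "p' \<in> A"
    then have "fst p' \<in> endpoints (A - {p})"
      using fst_snd(1) p'(3) by blast
    then show False
      using gap p'(2) unfolding prod_le_def by auto
  qed
  show "\<not> prod_le q p' \<and> \<not> prod_le p' q" if q: "q \<in> A - {p}" for q
  proof -
    have "\<not> prod_le q p" "\<not> prod_le p q"
      using q pair_antichainsD(4)[OF A _ p] pair_antichainsD(4)[OF A p] by blast+
    then show ?thesis
      using gap[OF fst_snd(1)[OF q]] gap[OF fst_snd(2)[OF q]] p'(2) unfolding prod_le_def by auto
  qed
qed

lemma prec_k_shift_endpoint:
  assumes A: "A \<in> pair_antichains m k"
    and z: "z \<in> endpoints A" "Suc z \<notin> endpoints A" "Suc z \<le> m"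
  obtains A' where "prec_k (increasing_pairs m) prod_le k A A'"
    "endpoints A' = insert (Suc z) (endpoints A - {z})"
proof -
  obtain x y where p: "(x, y) \<in> A" "z = x \<or> z = y"
    using z(1) unfolding endpoints_def by force
  define rest where "rest = endpoints (A - {(x, y)})"
  define p' where "p' = (if z = x then (Suc x, y) else (x, Suc y))"
  have bounds: "1 \<le> x" "x < y" "y \<le> m"
    using pair_antichain_memD[OF A p(1)] by simp_all
  have endpoints_A: "endpoints A = insert x (insert y rest)" and "x \<notin> rest" "y \<notin> rest"
    using endpoints_remove[OF A p(1)] unfolding rest_def by simp_all
  moreover have "Suc z \<notin> rest" "Suc z \<noteq> x" "Suc z \<noteq> y"
    using z(2) endpoints_A by blast+
  ultimately have gap: "\<not> (x \<le> u \<and> u \<le> fst p') \<and> \<not> (y \<le> u \<and> u \<le> snd p')" if "u \<in> rest" for u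
    using that p(2) unfolding p'_def by (auto simp: le_Suc_eq)
  have "p' \<in> increasing_pairs m"
    using bounds p(2) z(3) \<open>Suc z \<noteq> y\<close> unfolding p'_def increasing_pairs_def by auto
  moreover have "prod_le (x, y) p'" "(x, y) \<noteq> p'"
    unfolding p'_def prod_le_def by auto
  ultimately have "prec_k (increasing_pairs m) prod_le k A (insert p' (A - {(x, y)}))"
    using gap unfolding rest_def by (intro prec_k_enlarge_pair[OF A p(1)]) simp_all
  moreover have "endpoints (insert p' (A - {(x, y)})) = insert (Suc z) (endpoints A - {z})"
    using endpoints_A bounds p(2) \<open>x \<notin> rest\<close> \<open>y \<notin> rest\<close> unfolding p'_def rest_def
    by (auto simp: endpoints_insert)
  ultimately show thesis
    using that by blast
qed

lemma endpoints_eq_if_count_upto_eq: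
  assumes A: "A \<in> pair_antichains m k" and B: "B \<in> pair_antichains m k"
    and eq: "\<And>t. count_upto (endpoints A) t = count_upto (endpoints B) t"
  shows "A = B"
proof -
  have fin: "finite (endpoints A)" "finite (endpoints B)"
    and card: "card (endpoints A) = card (endpoints B)"
    using CsetD[OF endpoints_in_Cset[OF A]] CsetD[OF endpoints_in_Cset[OF B]] by simp_all
  have "endpoints A = endpoints B"
    using C_le_iff_count_upto[OF fin card] C_le_iff_count_upto[OF fin(2,1) card[symmetric]] eq
    by (intro C_le_antisym[OF fin]) simp_all
  then show ?thesis
    using bij_betw_endpoints[of m k] A B unfolding bij_betw_def inj_on_def by blast
qed

lemma prec_k_step_towards:
  assumes A: "A \<in> pair_antichains m k" and B: "B \<in> pair_antichains m k"
    and dom: "\<forall>t. count_upto (endpoints B) t \<le> count_upto (endpoints A) t"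
    and t: "count_upto (endpoints B) t < count_upto (endpoints A) t"
  obtains A' z where "prec_k (increasing_pairs m) prod_le k A A'"
    "\<forall>s. count_upto (endpoints B) s \<le> count_upto (endpoints A') s"
    "\<forall>s. count_upto (endpoints A') s \<le> count_upto (endpoints A) s"
    "z \<le> m" "count_upto (endpoints A') z < count_upto (endpoints A) z"
proof -
  have sub: "endpoints A \<subseteq> {1..m}" "endpoints B \<subseteq> {1..m}"
    and card: "card (endpoints A) = card (endpoints B)"
    using CsetD[OF endpoints_in_Cset[OF A]] CsetD[OF endpoints_in_Cset[OF B]] by simp_all
  obtain z where z: "z \<in> endpoints A" "Suc z \<notin> endpoints A" "Suc z \<le> m"
    and less_z: "count_upto (endpoints B) z < count_upto (endpoints A) z"
    using obtain_shiftable_element[OF sub card t] by blast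
  obtain A' where step: "prec_k (increasing_pairs m) prod_le k A A'"
    and A': "endpoints A' = insert (Suc z) (endpoints A - {z})"
    using prec_k_shift_endpoint[OF A z] .
  have count: "count_upto (endpoints A') s =
      (if s = z then count_upto (endpoints A) s - 1 else count_upto (endpoints A) s)" for s
    unfolding A' using sub(1) z(1,2) by (intro count_upto_shift) (auto intro: finite_subset)
  have "count_upto (endpoints B) s \<le> count_upto (endpoints A') s" for s
    using spec[OF dom, of s] less_z count[of s] by (cases "s = z") auto
  moreover have "count_upto (endpoints A') s \<le> count_upto (endpoints A) s" for s
    using count[of s] by simp
  moreover have "count_upto (endpoints A') z < count_upto (endpoints A) z"
    using count[of z] less_z by simp
  ultimately show thesis
    using that[OF step] Suc_leD[OF z(3)] by blast
qed

lemma le_k_if_count_upto: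
  assumes A: "A \<in> pair_antichains m k" and B: "B \<in> pair_antichains m k"
    and dom: "\<forall>t. count_upto (endpoints B) t \<le> count_upto (endpoints A) t"
  shows "le_k (increasing_pairs m) prod_le k A B"
proof -
  define defect where
    "defect A' = (\<Sum>t\<le>m. count_upto (endpoints A') t - count_upto (endpoints B) t)" for A'
  show ?thesis
    using A dom
  proof (induction "defect A" arbitrary: A rule: less_induct)
    case less
    show ?case
    proof (cases "\<exists>t. count_upto (endpoints B) t < count_upto (endpoints A) t")
      case False
      have "count_upto (endpoints A) t = count_upto (endpoints B) t" for t
        using spec[OF less.prems(2), of t] False by (simp add: not_less le_antisym)
      then have "A = B"
        by (rule endpoints_eq_if_count_upto_eq[OF less.prems(1) B])
      then show ?thesis
        unfolding le_k_def by simp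
    next
      case True
      then obtain A' z where step: "prec_k (increasing_pairs m) prod_le k A A'"
        and dom': "\<forall>s. count_upto (endpoints B) s \<le> count_upto (endpoints A') s"
        and le: "\<forall>s. count_upto (endpoints A') s \<le> count_upto (endpoints A) s"
        and z: "z \<le> m" "count_upto (endpoints A') z < count_upto (endpoints A) z"
        using prec_k_step_towards[OF less.prems(1) B less.prems(2)] by blast
      have "defect A' < defect A"
        unfolding defect_def
      proof (rule sum_strict_mono_ex1)
        show "\<forall>s\<in>{..m}. count_upto (endpoints A') s - count_upto (endpoints B) s
            \<le> count_upto (endpoints A) s - count_upto (endpoints B) s"
          using le by (simp add: diff_le_mono)
        show "\<exists>s\<in>{..m}. count_upto (endpoints A') s - count_upto (endpoints B) s
            < count_upto (endpoints A) s - count_upto (endpoints B) s"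
          using dom' z by (intro bexI[of _ z]) (auto intro: diff_less_mono)
      qed simp
      moreover have "A' \<in> pair_antichains m k"
        using step unfolding prec_k_def by blast
      ultimately have "le_k (increasing_pairs m) prod_le k A' B"
        using less.hyps dom' by blast
      with step show ?thesis
        unfolding le_k_def by (rule converse_rtranclp_into_rtranclp)
    qed
  qed
qed

lemma poset_iso_pair_antichains_Cset:
  "poset_iso (pair_antichains m k) (le_k (increasing_pairs m) prod_le k) (Cset m (2 * k)) C_le"
  unfolding poset_iso_def
proof (intro exI conjI ballI)
  show "bij_betw endpoints (pair_antichains m k) (Cset m (2 * k))"
    by (rule bij_betw_endpoints)
  fix A B assume A: "A \<in> pair_antichains m k" and B: "B \<in> pair_antichains m k"
  have "finite (endpoints A)" "finite (endpoints B)" "card (endpoints A) = card (endpoints B)"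
    using CsetD[OF endpoints_in_Cset[OF A]] CsetD[OF endpoints_in_Cset[OF B]] by simp_all
  then have "C_le (endpoints A) (endpoints B) \<longleftrightarrow>
      (\<forall>t. count_upto (endpoints B) t \<le> count_upto (endpoints A) t)"
    by (rule C_le_iff_count_upto)
  also have "\<dots> \<longleftrightarrow> le_k (increasing_pairs m) prod_le k A B"
    using le_k_count_upto le_k_if_count_upto[OF A B] by blast
  finally show "le_k (increasing_pairs m) prod_le k A B \<longleftrightarrow> C_le (endpoints A) (endpoints B)"
    by (rule sym)
qed

theorem proposition4p1:
  fixes n k :: nat
  assumes "k \<le> (n + 2) div 2"
  shows "poset_iso
           (antichains_k (order_ideals (grid n) prod_le) (\<subseteq>) k)
           (le_k (order_ideals (grid n) prod_le) (\<subseteq>) k)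
           (antichains_k (Cset (n + 2) 2) C_le k)
           (le_k (Cset (n + 2) 2) C_le k)
       \<and> poset_iso
           (antichains_k (Cset (n + 2) 2) C_le k)
           (le_k (Cset (n + 2) 2) C_le k)
           (Cset (n + 2) (2 * k))
           C_le"
proof
  have "poset_iso (order_ideals (grid n) prod_le) (\<subseteq>) (Cset (n + 2) 2) C_le"
    using poset_iso_sym[OF poset_iso_increasing_pairs_order_ideals]
      poset_iso_increasing_pairs_Cset_2 by (rule poset_iso_trans)
  then show "poset_iso
      (antichains_k (order_ideals (grid n) prod_le) (\<subseteq>) k) (le_k (order_ideals (grid n) prod_le) (\<subseteq>) k)
      (antichains_k (Cset (n + 2) 2) C_le k) (le_k (Cset (n + 2) 2) C_le k)"
    by (rule poset_iso_antichains_k)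
  show "poset_iso (antichains_k (Cset (n + 2) 2) C_le k) (le_k (Cset (n + 2) 2) C_le k)
      (Cset (n + 2) (2 * k)) C_le"
    using poset_iso_antichains_k[OF poset_iso_sym[OF poset_iso_increasing_pairs_Cset_2]]
      poset_iso_pair_antichains_Cset by (rule poset_iso_trans)
qed

end
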